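(* Let $n\ge 1$ and let $\beta=\beta^{(2n)}=(\beta_{ij})_{i,j\ge 0,\ i+j\le 2n}$ be a real truncated moment sequence with moment matrix $\mathcal M(n)(\beta)$. Let $r=\operatorname{rank}\mathcal M(n)(\beta)$ and $v=\operatorname{card}\mathcal V(\mathcal M(n)(\beta))$, and assume $v<\infty$ and $v=r$. Then $\beta$ admits a representing measure if and only if $\mathcal M(n)(\beta)$ has a positive semidefinite moment matrix extension $\mathcal M(n+1)$ satisfying $\operatorname{rank}\mathcal M(n+1)\le \operatorname{card}\mathcal V(\mathcal M(n+1))$.
   Context: For a real sequence $\gamma=(\gamma_{ij})_{i,j\ge0,\ i+j\le 2m}$, the moment matrix $\mathcal M(m)(\gamma)$ has rows and columns indexed by the monomials $1,X,Y,X^2,XY,Y^2,\dots,X^m,\dots,Y^m$ (degree-lexicographic order), the entry in row $X^iY^j$ and column $X^kY^l$ being $\gamma_{i+k,j+l}$. For a polynomial $p(x,y)=\sum a_{ij}x^iy^j$ of degree at most $m$, $p(X,Y)$ denotes the corresponding linear combination $\sum a_{ij}X^iY^j$ of columns of $\mathcal M(m)$. The algebraic variety of $\mathcal M(m)$ is $\mathcal V(\mathcal M(m))=\bigcap\{\mathcal Z(p): \deg p\le m,\ p(X,Y)=\mathbf 0\}$, where $\mathcal Z(p)=\{(x,y)\in\mathbb R^2: p(x,y)=0\}$. A representing measure for $\beta$ is a positive Borel measure $\mu$ on $\mathbb R^2$ with $\beta_{ij}=\int x^iy^j\,d\mu$ for all $i+j\le 2n$. A moment matrix extension $\mathcal M(n+1)$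 of $\mathcal M(n)(\beta)$ is a matrix $\mathcal M(n+1)(\tilde\beta)$ for some real sequence $\tilde\beta$ of degree $2n+2$ with $\tilde\beta_{ij}=\beta_{ij}$ for $i+j\le 2n$. *)

theory Defs
  imports "HOL-Analysis.Analysis" "Jordan_Normal_Form.DL_Rank"
begin

text \<open>Monomials X^i Y^j of degree at most m, encoded as exponent pairs (i,j),
  in degree-lexicographic order 1, X, Y, X^2, XY, Y^2, ...\<close>
definition mons :: "nat \<Rightarrow> (nat \<times> nat) list" where
  "mons m = concat (map (\<lambda>k. map (\<lambda>i. (i, k - i)) (rev [0..<Suc k])) [0..<Suc m])"

definition msize :: "nat \<Rightarrow> nat" where
  "msize m = length (mons m)"

definition moment_matrix :: "nat \<Rightarrow> (nat \<Rightarrow> nat \<Rightarrow> real) \<Rightarrow> real mat" where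
  "moment_matrix m \<gamma> = mat (msize m) (msize m)
     (\<lambda>(a, b). \<gamma> (fst (mons m ! a) + fst (mons m ! b)) (snd (mons m ! a) + snd (mons m ! b)))"

definition poly_eval :: "nat \<Rightarrow> real vec \<Rightarrow> real \<times> real \<Rightarrow> real" where
  "poly_eval m c = (\<lambda>(x, y). \<Sum>a<msize m. c $ a * x ^ fst (mons m ! a) * y ^ snd (mons m ! a))"

text \<open>Algebraic variety: common zeros of all polynomials p of degree at most m with p(X,Y) = 0
  (i.e. the coefficient vector lies in the kernel of the moment matrix).\<close>
definition variety :: "nat \<Rightarrow> (nat \<Rightarrow> nat \<Rightarrow> real) \<Rightarrow> (real \<times> real) set" where
  "variety m \<gamma> = (\<Inter> {{z. poly_eval m c z = 0} | c.
       c \<in> carrier_vec (msize m) \<and> moment_matrix m \<gamma> *\<^sub>v c = 0\<^sub>v (msize m)})"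

definition mm_rank :: "nat \<Rightarrow> (nat \<Rightarrow> nat \<Rightarrow> real) \<Rightarrow> nat" where
  "mm_rank m \<gamma> = vec_space.rank (msize m) (moment_matrix m \<gamma>)"

definition psd :: "real mat \<Rightarrow> bool" where
  "psd A \<longleftrightarrow> (\<forall>v \<in> carrier_vec (dim_row A). v \<bullet> (A *\<^sub>v v) \<ge> 0)"

definition representing_measure :: "nat \<Rightarrow> (nat \<Rightarrow> nat \<Rightarrow> real) \<Rightarrow> (real \<times> real) measure \<Rightarrow> bool" where
  "representing_measure n \<beta> \<mu> \<longleftrightarrow> sets \<mu> = sets borel \<and>
     (\<forall>i j. i + j \<le> 2 * n \<longrightarrow>
        integrable \<mu> (\<lambda>z. (fst z) ^ i * (snd z) ^ j) \<and>
        (\<integral>z. (fst z) ^ i * (snd z) ^ j \<partial>\<mu>) = \<beta> i j)"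

end

theory Submission
  imports Defs
begin

text \<open>
  If \<mu> represents \<beta>, every polynomial of degree at most n in the kernel of M(n) has vanishing
  integral of its square, so \<mu> is supported on the finite variety V(M(n)). Hence \<mu> is atomic,
  and the moments of degree 2n+2 of this atomic measure give a positive semidefinite extension
  M(n+1) whose rank is at most the number of atoms, all of which lie in V(M(n+1)).

  Conversely, for a positive semidefinite extension, kernel vectors of M(n) padded by zeros are
  kernel vectors of M(n+1), so V(M(n+1)) \<subseteq> V(M(n)) and
  rank M(n) \<le> rank M(n+1) \<le> card V(M(n+1)) \<le> card V(M(n)) = rank M(n):
  the extension is flat and its variety has exactly r points. Columns J of M(n) that form a
  basis of the column space then also span M(n+1). The evaluation vector of each point of the
  variety lies in this column space, and the form M(n+1) restricted to these vectors is
  diagonal, because multiplication by x and by y is self-adjoint for the moment form and the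
  points are distinct. This writes M(n+1) as a positive combination of the rank-one matrices
  v v^T of the evaluation vectors v of the points, i.e. an atomic representing measure.
\<close>

no_notation Finite_Cartesian_Product.vec.vec_nth (infixl "$" 90)

section \<open>Linear algebra\<close>

lemma mat_vec_solvable_if_kernel_trivial:
  fixes C :: "'a :: field mat"
  assumes C: "C \<in> carrier_mat r r" and t: "t \<in> carrier_vec r"
    and ker: "\<And>v. v \<in> carrier_vec r \<Longrightarrow> C *\<^sub>v v = 0\<^sub>v r \<Longrightarrow> v = 0\<^sub>v r"
  shows "\<exists>u \<in> carrier_vec r. C *\<^sub>v u = t"
proof -
  have "det C \<noteq> 0"
    using ker det_0_iff_vec_prod_zero_field[OF C] by blast
  then have "C \<in> Units (ring_mat TYPE('a) r ())" by (rule det_non_zero_imp_unit[OF C])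
  then obtain D where D: "D \<in> carrier_mat r r" "C * D = 1\<^sub>m r"
    unfolding Units_def by (auto simp: ring_mat_def)
  have "C *\<^sub>v (D *\<^sub>v t) = t"
    using D C t by (metis assoc_mult_mat_vec one_mult_mat_vec)
  then show ?thesis using D t by (intro bexI[of _ "D *\<^sub>v t"]) auto
qed

lemma square_system_solvable:
  fixes f :: "'i \<Rightarrow> 'k \<Rightarrow> 'a :: field"
  assumes fI: "finite I" and fK: "finite K" and card: "card I = card K"
    and inj: "\<And>c. \<forall>i\<in>I. (\<Sum>k\<in>K. f i k * c k) = 0 \<Longrightarrow> \<forall>k\<in>K. c k = 0"
  shows "\<exists>y. \<forall>i\<in>I. (\<Sum>k\<in>K. f i k * y k) = t i"
proof -
  define r where "r = card I"
  obtain gi where gi: "bij_betw gi {..<r} I"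
    using ex_bij_betw_nat_finite[OF fI] r_def by (auto simp: atLeast0LessThan)
  obtain gk where gk: "bij_betw gk {..<r} K"
    using ex_bij_betw_nat_finite[OF fK] r_def card by (metis atLeast0LessThan)
  define coord where "coord v k = v $ the_inv_into {..<r} gk k" for v :: "'a vec" and k
  have coord_gk: "coord v (gk b) = v $ b" if "b < r" for v b
    unfolding coord_def using gk that by (simp add: bij_betw_def the_inv_into_f_f)
  define C where "C = mat r r (\<lambda>(a, b). f (gi a) (gk b))"
  have C: "C \<in> carrier_mat r r" unfolding C_def by simp
  have system: "(\<Sum>k\<in>K. f (gi a) k * coord v k) = (C *\<^sub>v v) $ a"
    if "a < r" "v \<in> carrier_vec r" for a v
  proof -
    have "(\<Sum>k\<in>K. f (gi a) k * coord v k) = (\<Sum>b<r. f (gi a) (gk b) * v $ b)"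
      using sum.reindex_bij_betw[OF gk, of "\<lambda>k. f (gi a) k * coord v k"] coord_gk by simp
    then show ?thesis
      using that unfolding C_def
      by (auto simp: mult_mat_vec_def scalar_prod_def row_def atLeast0LessThan intro!: sum.cong)
  qed
  have I_eq: "I = gi ` {..<r}" using gi by (simp add: bij_betw_def)
  have "\<exists>u \<in> carrier_vec r. C *\<^sub>v u = vec r (\<lambda>a. t (gi a))"
  proof (rule mat_vec_solvable_if_kernel_trivial[OF C])
    fix v assume v: "v \<in> carrier_vec r" "C *\<^sub>v v = 0\<^sub>v r"
    have "\<forall>i\<in>I. (\<Sum>k\<in>K. f i k * coord v k) = 0"
      using system v unfolding I_eq by auto
    then have "\<forall>k\<in>K. coord v k = 0" by (rule inj)
    then show "v = 0\<^sub>v r"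
      using v(1) coord_gk gk by (intro eq_vecI) (auto simp: bij_betw_def)
  qed simp
  then obtain u where u: "u \<in> carrier_vec r" "C *\<^sub>v u = vec r (\<lambda>a. t (gi a))" by blast
  show ?thesis
    using system[OF _ u(1)] u(2) unfolding I_eq by (intro exI[of _ "coord u"]) auto
qed

definition cols_indep :: "'a :: field mat \<Rightarrow> nat set \<Rightarrow> bool" where
  "cols_indep A J \<longleftrightarrow> (\<forall>y. (\<forall>i<dim_row A. (\<Sum>j\<in>J. y j * A $$ (i, j)) = 0) \<longrightarrow> (\<forall>j\<in>J. y j = 0))"

lemma cols_indepD:
  assumes "cols_indep A J" "A \<in> carrier_mat n nc" "\<And>i. i < n \<Longrightarrow> (\<Sum>j\<in>J. y j * A $$ (i, j)) = 0"
  shows "\<forall>j\<in>J. y j = 0"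
  using assms unfolding cols_indep_def by auto

context vec_space
begin

lemma cols_indep_inj_on_col:
  fixes A :: "'a mat"
  assumes A: "A \<in> carrier_mat n nc" and J: "J \<subseteq> {..<nc}" and ind: "cols_indep A J"
  shows "inj_on (col A) J"
proof (rule inj_onI, rule ccontr)
  fix j1 j2 assume j: "j1 \<in> J" "j2 \<in> J" "col A j1 = col A j2" "j1 \<noteq> j2"
  have fJ: "finite J" using J finite_subset by blast
  define y where "y j = (if j = j1 then 1 else if j = j2 then -1 else (0::'a))" for j
  have "(\<Sum>j\<in>J. y j * A $$ (i, j)) = 0" if i: "i < n" for i
  proof -
    have "(\<Sum>j\<in>J. y j * A $$ (i, j))
        = (\<Sum>j\<in>J. (if j = j1 then A $$ (i, j1) else 0) + (if j = j2 then - A $$ (i, j2) else 0))"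
      by (rule sum.cong) (auto simp: y_def j(4))
    also have "\<dots> = A $$ (i, j1) - A $$ (i, j2)"
      using fJ j(1,2) by (simp add: sum.distrib)
    also have "\<dots> = 0"
      using arg_cong[OF j(3), of "\<lambda>v. v $ i"] i A J j(1,2) by (simp add: subset_iff)
    finally show ?thesis .
  qed
  then have "y j1 = 0" using cols_indepD[OF ind A] j(1) by blast
  then show False by (simp add: y_def)
qed

lemma cols_indep_lin_indpt:
  fixes A :: "'a mat"
  assumes A: "A \<in> carrier_mat n nc" and J: "J \<subseteq> {..<nc}" and ind: "cols_indep A J"
  shows "lin_indpt (col A ` J)"
proof
  assume "lin_dep (col A ` J)"
  have fJ: "finite J" using J finite_subset by blast
  have inj: "inj_on (col A) J" by (rule cols_indep_inj_on_col[OF A J ind])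
  have cols: "col A ` J \<subseteq> carrier_vec n" using A by auto
  obtain a v where av: "lincomb a (col A ` J) = 0\<^sub>v n" "v \<in> col A ` J" "a v \<noteq> 0"
    using finite_lin_dep[OF finite_imageI[OF fJ] \<open>lin_dep (col A ` J)\<close>] cols by auto
  have "(\<Sum>j\<in>J. a (col A j) * A $$ (i, j)) = 0" if i: "i < n" for i
  proof -
    have "(\<Sum>j\<in>J. a (col A j) * A $$ (i, j)) = (\<Sum>j\<in>J. a (col A j) * col A j $ i)"
      using i A J by (intro sum.cong) auto
    also have "\<dots> = (\<Sum>w\<in>col A ` J. a w * w $ i)"
      using sum.reindex[OF inj, of "\<lambda>w. a w * w $ i"] by (simp add: comp_def)
    also have "\<dots> = lincomb a (col A ` J) $ i" by (rule lincomb_index[OF i cols, symmetric])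
    also have "\<dots> = 0" using av(1) i by simp
    finally show ?thesis .
  qed
  then have "\<forall>j\<in>J. a (col A j) = 0" by (rule cols_indepD[OF ind A])
  then show False using av by auto
qed

lemma card_le_rank_if_cols_indep:
  fixes A :: "'a mat"
  assumes A: "A \<in> carrier_mat n nc" and J: "J \<subseteq> {..<nc}" and ind: "cols_indep A J"
  shows "card J \<le> rank A"
proof -
  have "col A ` J \<subseteq> set (cols A)" using A J by (auto simp: cols_def)
  from rank_ge_card_indpt[OF A this cols_indep_lin_indpt[OF A J ind]]
  show ?thesis using card_image[OF cols_indep_inj_on_col[OF A J ind]] by simp
qed

lemma ex_maximal_indpt_cols:
  "\<exists>S. maximal S (\<lambda>T. T \<subseteq> set (cols A) \<and> lin_indpt T)"
  using maximal_exists[of "\<lambda>T. T \<subseteq> set (cols A) \<and> lin_indpt T" "card (set (cols A))" "{}"]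
  by (meson List.finite_set card_mono empty_iff empty_subsetI finite_lin_indpt2 rev_finite_subset)

lemma cols_indep_if_lin_indpt:
  fixes A :: "'a mat"
  assumes A: "A \<in> carrier_mat n nc" and J: "J \<subseteq> {..<nc}"
    and inj: "inj_on (col A) J" and li: "lin_indpt (col A ` J)"
  shows "cols_indep A J"
  unfolding cols_indep_def
proof (intro allI impI)
  fix y assume y: "\<forall>i<dim_row A. (\<Sum>j\<in>J. y j * A $$ (i, j)) = 0"
  have fJ: "finite J" using J finite_subset by blast
  have cols: "col A ` J \<subseteq> carrier_vec n" using A by auto
  define a where "a v = y (the_inv_into J (col A) v)" for v
  have "lincomb a (col A ` J) = 0\<^sub>v n"
  proof (rule eq_vecI)
    fix i assume "i < dim_vec (0\<^sub>v n)"
    then have i: "i < n" by simp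
    have "lincomb a (col A ` J) $ i = (\<Sum>j\<in>J. a (col A j) * col A j $ i)"
      unfolding lincomb_index[OF i cols] using sum.reindex[OF inj, of "\<lambda>w. a w * w $ i"]
      by (simp add: comp_def)
    also have "\<dots> = (\<Sum>j\<in>J. y j * A $$ (i, j))"
      using i A J inj by (intro sum.cong) (auto simp: a_def the_inv_into_f_f)
    also have "\<dots> = 0" using y i A by simp
    finally show "lincomb a (col A ` J) $ i = 0\<^sub>v n $ i" using i by simp
  qed (use lincomb_dim[OF finite_imageI[OF fJ] cols] in simp)
  then have "a \<in> col A ` J \<rightarrow> {0}"
    using not_lindepD[OF li finite_imageI[OF fJ] subset_refl] by auto
  then have "a (col A j) = 0" if "j \<in> J" for j using that by auto
  then show "\<forall>j\<in>J. y j = 0" using inj by (simp add: a_def the_inv_into_f_f)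
qed

lemma ex_cols_indep_card_rank:
  fixes A :: "'a mat"
  assumes A: "A \<in> carrier_mat n nc"
  shows "\<exists>J. J \<subseteq> {..<nc} \<and> card J = rank A \<and> cols_indep A J"
proof -
  obtain S where S: "maximal S (\<lambda>T. T \<subseteq> set (cols A) \<and> lin_indpt T)"
    using ex_maximal_indpt_cols by blast
  have SA: "S \<subseteq> set (cols A)" and li: "lin_indpt S" using S by (auto simp: maximal_def)
  define idx where "idx v = (SOME j. j < nc \<and> col A j = v)" for v
  have idx: "idx v < nc \<and> col A (idx v) = v" if "v \<in> S" for v
  proof -
    from that SA obtain j where "j < nc" "col A j = v" using A by (auto simp: cols_def)
    then show ?thesis unfolding idx_def by (metis (mono_tags, lifting) someI_ex)
  qed
  have inj_idx: "inj_on idx S" by (metis inj_onI idx)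
  have inj_col: "inj_on (col A) (idx ` S)" by (rule inj_onI) (auto simp: idx)
  have cols: "col A ` idx ` S = S" using idx by (force simp: image_image)
  show ?thesis
  proof (intro exI conjI)
    show "idx ` S \<subseteq> {..<nc}" using idx by auto
    then show "cols_indep A (idx ` S)"
      using cols_indep_if_lin_indpt[OF A _ inj_col] li cols by simp
    show "card (idx ` S) = rank A"
      using card_image[OF inj_idx] rank_card_indpt[OF A S] by simp
  qed
qed

lemma col_in_span_if_cols_indep:
  fixes A :: "'a mat"
  assumes A: "A \<in> carrier_mat n nc" and J: "J \<subseteq> {..<nc}" and rank: "rank A \<le> card J"
    and ind: "cols_indep A J" and k: "k < nc"
  shows "\<exists>c. \<forall>i<n. A $$ (i, k) = (\<Sum>j\<in>J. c j * A $$ (i, j))"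
proof -
  have fJ: "finite J" using J finite_subset by blast
  let ?S = "col A ` J"
  have inj: "inj_on (col A) J" by (rule cols_indep_inj_on_col[OF A J ind])
  have Sc: "?S \<subseteq> carrier_vec n" using A by auto
  have "col A k \<in> span ?S"
  proof (rule ccontr)
    assume ns: "col A k \<notin> span ?S"
    then have nin: "col A k \<notin> ?S" using span_mem[OF Sc] by blast
    have "col A k \<in> carrier_vec n" using A by auto
    then have "lin_indpt (?S \<union> {col A k})"
      using lin_dep_iff_in_span[OF Sc cols_indep_lin_indpt[OF A J ind] _ nin] ns by blast
    moreover have "?S \<union> {col A k} \<subseteq> set (cols A)" using A J k by (auto simp: cols_def)
    ultimately have "card (?S \<union> {col A k}) \<le> rank A" using rank_ge_card_indpt[OF A] by blast
    moreover have "card (?S \<union> {col A k}) = card J + 1"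
      using nin fJ card_image[OF inj] by simp
    ultimately show False using rank by simp
  qed
  then obtain a where a: "lincomb a ?S = col A k"
    using finite_in_span[OF finite_imageI[OF fJ] Sc] by blast
  have "A $$ (i, k) = (\<Sum>j\<in>J. a (col A j) * A $$ (i, j))" if i: "i < n" for i
  proof -
    have "A $$ (i, k) = lincomb a ?S $ i" using a A i k by simp
    also have "\<dots> = (\<Sum>w\<in>?S. a w * w $ i)" by (rule lincomb_index[OF i Sc])
    also have "\<dots> = (\<Sum>j\<in>J. a (col A j) * col A j $ i)"
      using sum.reindex[OF inj, of "\<lambda>w. a w * w $ i"] by (simp add: comp_def)
    also have "\<dots> = (\<Sum>j\<in>J. a (col A j) * A $$ (i, j))"
      using i A J by (intro sum.cong) auto
    finally show ?thesis .
  qed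
  then show ?thesis by (intro exI[of _ "\<lambda>j. a (col A j)"]) blast
qed

lemma rank_le_card_if_cols_in_span:
  fixes A :: "'a mat"
  assumes A: "A \<in> carrier_mat n nc" and fT: "finite T"
    and g: "\<And>t. t \<in> T \<Longrightarrow> g t \<in> carrier_vec n"
    and span: "\<And>k. k < nc \<Longrightarrow> \<exists>c. \<forall>i<n. A $$ (i, k) = (\<Sum>t\<in>T. c t * g t $ i)"
  shows "rank A \<le> card T"
proof -
  obtain S where S: "maximal S (\<lambda>T. T \<subseteq> set (cols A) \<and> lin_indpt T)"
    using ex_maximal_indpt_cols by blast
  have SA: "S \<subseteq> set (cols A)" and li: "lin_indpt S" using S by (auto simp: maximal_def)
  have fS: "finite S" using SA finite_subset by blast
  have Uc: "g ` T \<subseteq> carrier_vec n" using g by auto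
  have "S \<subseteq> span (g ` T)"
  proof
    fix v assume "v \<in> S"
    then obtain k where k: "k < nc" "v = col A k" using SA A by (auto simp: cols_def)
    obtain c where c: "\<forall>i<n. A $$ (i, k) = (\<Sum>t\<in>T. c t * g t $ i)" using span[OF k(1)] by blast
    define b where "b u = (\<Sum>t\<in>{t\<in>T. g t = u}. c t)" for u
    have "lincomb b (g ` T) = v"
    proof (rule eq_vecI)
      fix i assume "i < dim_vec v"
      then have i: "i < n" using k A by simp
      have "lincomb b (g ` T) $ i = (\<Sum>u\<in>g ` T. \<Sum>t\<in>{t\<in>T. g t = u}. c t * g t $ i)"
        unfolding lincomb_index[OF i Uc] b_def sum_distrib_right by (intro sum.cong) auto
      also have "\<dots> = (\<Sum>t\<in>T. c t * g t $ i)"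
        by (rule sum.group[OF fT finite_imageI[OF fT] subset_refl])
      also have "\<dots> = v $ i" using c i k A by simp
      finally show "lincomb b (g ` T) $ i = v $ i" .
    qed (use lincomb_dim[OF finite_imageI[OF fT] Uc] k A in simp)
    then show "v \<in> span (g ` T)" using fT by (intro in_spanI[of _ b]) auto
  qed
  from replacement[OF fS finite_imageI[OF fT] Uc li this] have "card S \<le> card (g ` T)" by auto
  also have "card (g ` T) \<le> card T" using card_image_le[OF fT] .
  finally show ?thesis using rank_card_indpt[OF A S] by simp
qed

end

section \<open>Positive semidefinite forms\<close>

lemma linear_quadratic_nonneg_imp_linear_zero:
  fixes x y :: real
  assumes "\<And>t. 0 \<le> 2 * t * x + t\<^sup>2 * y" and "0 \<le> y"
  shows "x = 0"
proof (rule ccontr)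
  assume x: "x \<noteq> 0"
  define t where "t = - x / (y + 1)"
  have ty: "(y + 1) * t = - x" unfolding t_def using assms(2) by simp
  have "(y + 1)\<^sup>2 * (2 * t * x + t\<^sup>2 * y) = 2 * x * (y + 1) * ((y + 1) * t) + ((y + 1) * t)\<^sup>2 * y"
    by (simp add: algebra_simps power2_eq_square)
  also have "\<dots> = - (x\<^sup>2 * (y + 2))" unfolding ty by (simp add: algebra_simps power2_eq_square)
  also have "\<dots> < 0" using x assms(2) by (simp add: mult_pos_pos)
  finally show False using assms(1)[of t] by (smt (verit) zero_le_mult_iff zero_le_power2)
qed

lemma psd_form_eq_0_imp_kernel:
  fixes M :: "nat \<Rightarrow> nat \<Rightarrow> real"
  assumes sym: "\<And>a b. M a b = M b a"
    and psd: "\<And>c. 0 \<le> (\<Sum>a<N. \<Sum>b<N. c a * M a b * c b)"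
    and zero: "(\<Sum>a<N. \<Sum>b<N. c a * M a b * c b) = 0"
  shows "\<forall>a<N. (\<Sum>b<N. M a b * c b) = 0"
proof -
  define B where "B d e = (\<Sum>a<N. \<Sum>b<N. d a * M a b * e b)" for d e
  define d where "d a = (\<Sum>b<N. M a b * c b)" for a
  have "B (\<lambda>a. c a + t * d a) (\<lambda>a. c a + t * d a) = B c c + t * B d c + t * B c d + t\<^sup>2 * B d d"
    for t
    unfolding B_def by (simp add: algebra_simps power2_eq_square sum.distrib sum_distrib_left)
  moreover have "B c d = B d c"
    unfolding B_def by (subst sum.swap) (simp add: sym mult_ac)
  ultimately have "0 \<le> 2 * t * B d c + t\<^sup>2 * B d d" for t
    using psd[of "\<lambda>a. c a + t * d a"] zero unfolding B_def by simp
  then have "B d c = 0"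
    using linear_quadratic_nonneg_imp_linear_zero psd[of d] unfolding B_def by blast
  moreover have "B d c = (\<Sum>a<N. (d a)\<^sup>2)"
    unfolding B_def d_def by (simp add: power2_eq_square sum_distrib_left mult_ac)
  ultimately show ?thesis unfolding d_def by (simp add: sum_nonneg_eq_0_iff)
qed

lemma sum_lessThan_if_mem:
  "J \<subseteq> {..<N :: nat} \<Longrightarrow> (\<Sum>b<N. if b \<in> J then g b else 0) = (\<Sum>b\<in>J. g b)"
  by (simp add: sum.inter_restrict[symmetric] Int_absorb1)

lemma form_restrict:
  fixes M :: "nat \<Rightarrow> nat \<Rightarrow> real"
  assumes J: "J \<subseteq> {..<N}"
  shows "(\<Sum>a<N. \<Sum>b<N. (if a \<in> J then c a else 0) * M a b * (if b \<in> J then c b else 0))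
    = (\<Sum>a\<in>J. c a * (\<Sum>b\<in>J. M a b * c b))"
proof -
  have "(\<Sum>a<N. \<Sum>b<N. (if a \<in> J then c a else 0) * M a b * (if b \<in> J then c b else 0))
     = (\<Sum>a<N. if a \<in> J then c a * (\<Sum>b<N. if b \<in> J then M a b * c b else 0) else 0)"
    by (intro sum.cong) (auto simp: sum_distrib_left mult_ac intro!: sum.cong)
  also have "\<dots> = (\<Sum>a\<in>J. c a * (\<Sum>b\<in>J. M a b * c b))"
    by (simp add: sum_lessThan_if_mem[OF J])
  finally show ?thesis .
qed

section \<open>Flat positive semidefinite forms are atomic\<close>

text \<open>
  In the application, \<open>B\<close> is the form of M(n+1), \<open>J\<close> indexes a basis of its columns
  inside M(n), \<open>e z\<close> is the vector of monomials evaluated at \<open>z\<close>, and \<open>shx k\<close>,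
  \<open>shy k\<close> index the monomials x m and y m for the k-th monomial m. The symmetry
  assumptions on the shifts say that multiplication by x and by y is self-adjoint for the form.
\<close>

locale flat_form =
  fixes S :: nat and B :: "nat \<Rightarrow> nat \<Rightarrow> real" and J :: "nat set"
    and Z :: "(real \<times> real) set" and e :: "real \<times> real \<Rightarrow> nat \<Rightarrow> real"
    and coef :: "nat \<Rightarrow> nat \<Rightarrow> real" and shx shy :: "nat \<Rightarrow> nat"
  assumes J_subset: "J \<subseteq> {..<S}" and finite_Z: "finite Z" and card_J: "card J = card Z"
    and sym: "\<And>a b. B a b = B b a"
    and psd: "\<And>c. 0 \<le> (\<Sum>a<S. \<Sum>b<S. c a * B a b * c b)"
    and indep: "\<And>y. \<forall>a<S. (\<Sum>j\<in>J. y j * B a j) = 0 \<Longrightarrow> \<forall>j\<in>J. y j = 0"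
    and span: "\<And>k a. k < S \<Longrightarrow> a < S \<Longrightarrow> B a k = (\<Sum>j\<in>J. coef k j * B a j)"
    and kernel_orth: "\<And>z c. z \<in> Z \<Longrightarrow> \<forall>a<S. (\<Sum>b<S. B a b * c b) = 0 \<Longrightarrow> (\<Sum>a<S. c a * e z a) = 0"
    and S_pos: "0 < S" and e_0: "\<And>z. z \<in> Z \<Longrightarrow> e z 0 = 1"
    and shx_less: "\<And>k. k \<in> J \<Longrightarrow> shx k < S" and shy_less: "\<And>k. k \<in> J \<Longrightarrow> shy k < S"
    and shx_sym: "\<And>k l. k \<in> J \<Longrightarrow> l \<in> J \<Longrightarrow> B (shx k) l = B (shx l) k"
    and shy_sym: "\<And>k l. k \<in> J \<Longrightarrow> l \<in> J \<Longrightarrow> B (shy k) l = B (shy l) k"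
    and e_shx: "\<And>z k. z \<in> Z \<Longrightarrow> k \<in> J \<Longrightarrow> e z (shx k) = fst z * e z k"
    and e_shy: "\<And>z k. z \<in> Z \<Longrightarrow> k \<in> J \<Longrightarrow> e z (shy k) = snd z * e z k"
begin

lemma finite_J: "finite J"
  using J_subset finite_subset by blast

lemma e_eq_coef_sum:
  assumes z: "z \<in> Z" and k: "k < S"
  shows "e z k = (\<Sum>j\<in>J. coef k j * e z j)"
proof -
  define c where "c b = (if b = k then 1 else 0) - (if b \<in> J then coef k b else 0)" for b
  have expand: "(\<Sum>b<S. c b * f b) = f k - (\<Sum>j\<in>J. coef k j * f j)" for f
  proof -
    have "(\<Sum>b<S. c b * f b) = (\<Sum>b<S. (if b = k then f b else 0) - (if b \<in> J then coef k b * f b else 0))"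
      unfolding c_def by (intro sum.cong) (auto simp: algebra_simps)
    then show ?thesis using k by (simp add: sum_subtractf sum_lessThan_if_mem[OF J_subset])
  qed
  have "\<forall>a<S. (\<Sum>b<S. B a b * c b) = 0"
    using expand[of "B _"] span[OF k] by (simp add: mult.commute)
  from kernel_orth[OF z this] show ?thesis using expand[of "e z"] by simp
qed

lemma block_kernel_trivial:
  assumes "\<forall>i\<in>J. (\<Sum>k\<in>J. B i k * c k) = 0"
  shows "\<forall>k\<in>J. c k = 0"
proof -
  let ?c = "\<lambda>a. if a \<in> J then c a else 0"
  have "(\<Sum>a<S. \<Sum>b<S. ?c a * B a b * ?c b) = 0" unfolding form_restrict[OF J_subset] using assms by simp
  from psd_form_eq_0_imp_kernel[of B S ?c, OF sym psd this]
  have "\<forall>a<S. (\<Sum>j\<in>J. c j * B a j) = 0"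
    by (simp add: if_distrib sum_lessThan_if_mem[OF J_subset] mult.commute cong: if_cong)
  then show ?thesis by (rule indep)
qed

definition dual :: "real \<times> real \<Rightarrow> nat \<Rightarrow> real" where
  "dual z = (SOME y. \<forall>i\<in>J. (\<Sum>k\<in>J. B i k * y k) = e z i)"

lemma dual: "i \<in> J \<Longrightarrow> (\<Sum>k\<in>J. B i k * dual z k) = e z i"
  using someI_ex[OF square_system_solvable[OF finite_J finite_J refl block_kernel_trivial]]
  unfolding dual_def by blast

lemma form_dual:
  assumes z: "z \<in> Z" and a: "a < S"
  shows "(\<Sum>k\<in>J. B a k * dual z k) = e z a"
proof -
  have "(\<Sum>k\<in>J. B a k * dual z k) = (\<Sum>k\<in>J. \<Sum>j\<in>J. coef a j * B k j * dual z k)"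
    using J_subset span[OF a] sym by (intro sum.cong) (auto simp: sum_distrib_right)
  also have "\<dots> = (\<Sum>j\<in>J. coef a j * (\<Sum>k\<in>J. B j k * dual z k))"
    by (subst sum.swap) (simp add: sum_distrib_left sym mult_ac)
  also have "\<dots> = e z a" using dual e_eq_coef_sum[OF z a] by simp
  finally show ?thesis .
qed

text \<open>\<open>gram z w\<close> is the inner product of \<open>e z\<close> and \<open>e w\<close> induced by \<open>B\<close> on its column space.\<close>

definition gram :: "real \<times> real \<Rightarrow> real \<times> real \<Rightarrow> real" where
  "gram z w = (\<Sum>k\<in>J. dual z k * e w k)"

lemma gram_eq_form:
  assumes "w \<in> Z"
  shows "gram z w = (\<Sum>k\<in>J. \<Sum>l\<in>J. dual z k * B k l * dual w l)"
  unfolding gram_def using J_subset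
  by (intro sum.cong) (auto simp: form_dual[OF assms, symmetric] sum_distrib_left mult_ac)

lemma gram_sym: "z \<in> Z \<Longrightarrow> w \<in> Z \<Longrightarrow> gram z w = gram w z"
  unfolding gram_eq_form by (subst sum.swap) (simp add: sym mult_ac)

definition shifted_gram :: "(nat \<Rightarrow> nat) \<Rightarrow> real \<times> real \<Rightarrow> real \<times> real \<Rightarrow> real" where
  "shifted_gram P z w = (\<Sum>k\<in>J. \<Sum>l\<in>J. dual z k * B (P k) l * dual w l)"

lemma shifted_gram_sym:
  assumes "\<And>k l. k \<in> J \<Longrightarrow> l \<in> J \<Longrightarrow> B (P k) l = B (P l) k"
  shows "shifted_gram P z w = shifted_gram P w z"
  unfolding shifted_gram_def by (subst sum.swap) (auto simp: assms mult_ac intro!: sum.cong)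

lemma shifted_gram_eq:
  assumes w: "w \<in> Z" and P_less: "\<And>k. k \<in> J \<Longrightarrow> P k < S"
    and e_P: "\<And>k. k \<in> J \<Longrightarrow> e w (P k) = h * e w k"
  shows "shifted_gram P z w = h * gram z w"
proof -
  have "shifted_gram P z w = (\<Sum>k\<in>J. dual z k * (\<Sum>l\<in>J. B (P k) l * dual w l))"
    unfolding shifted_gram_def by (simp add: sum_distrib_left mult_ac)
  also have "\<dots> = h * gram z w"
    unfolding gram_def by (simp add: form_dual[OF w P_less] e_P sum_distrib_left mult_ac)
  finally show ?thesis .
qed

text \<open>The key step: x and y act as self-adjoint operators, so distinct points are orthogonal.\<close>

lemma gram_orthogonal:
  assumes z: "z \<in> Z" and w: "w \<in> Z" and "z \<noteq> w"
  shows "gram z w = 0"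
proof (rule ccontr)
  assume ne: "gram z w \<noteq> 0"
  have "fst w * gram z w = fst z * gram w z"
    using shifted_gram_eq[OF w shx_less e_shx[OF w]] shifted_gram_eq[OF z shx_less e_shx[OF z]]
      shifted_gram_sym[OF shx_sym] by metis
  then have "fst w = fst z" using ne gram_sym[OF z w] by simp
  moreover have "snd w * gram z w = snd z * gram w z"
    using shifted_gram_eq[OF w shy_less e_shy[OF w]] shifted_gram_eq[OF z shy_less e_shy[OF z]]
      shifted_gram_sym[OF shy_sym] by metis
  then have "snd w = snd z" using ne gram_sym[OF z w] by simp
  ultimately show False using \<open>z \<noteq> w\<close> by (simp add: prod_eq_iff)
qed

lemma gram_pos:
  assumes z: "z \<in> Z"
  shows "0 < gram z z"
proof -
  let ?c = "\<lambda>a. if a \<in> J then dual z a else 0"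
  have form: "(\<Sum>a<S. \<Sum>b<S. ?c a * B a b * ?c b) = gram z z"
    unfolding form_restrict[OF J_subset] gram_eq_form[OF z] by (simp add: sum_distrib_left mult_ac)
  have "gram z z \<noteq> 0"
  proof
    assume "gram z z = 0"
    then have "(\<Sum>b<S. B 0 b * ?c b) = 0"
      using psd_form_eq_0_imp_kernel[of B S ?c, OF sym psd] form S_pos by simp
    moreover have "(\<Sum>b<S. B 0 b * ?c b) = e z 0"
      using form_dual[OF z S_pos] by (simp add: if_distrib sum_lessThan_if_mem[OF J_subset] cong: if_cong)
    ultimately show False using e_0[OF z] by simp
  qed
  then show ?thesis using psd[of ?c] form by simp
qed

lemma sum_gram:
  assumes u: "u \<in> Z"
  shows "c u * gram u u = (\<Sum>i\<in>J. e u i * (\<Sum>w\<in>Z. dual w i * c w))"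
proof -
  have "(\<Sum>w\<in>Z. c w * gram w u) = (\<Sum>w\<in>Z. if w = u then c w * gram w u else 0)"
    by (intro sum.cong refl) (auto simp: gram_orthogonal u)
  also have "\<dots> = c u * gram u u" using u finite_Z by simp
  finally have "c u * gram u u = (\<Sum>w\<in>Z. c w * gram w u)" ..
  also have "\<dots> = (\<Sum>i\<in>J. e u i * (\<Sum>w\<in>Z. dual w i * c w))"
    unfolding gram_def sum_distrib_left by (subst sum.swap) (simp add: sum_distrib_left mult_ac)
  finally show ?thesis .
qed

lemma ex_dual_inverse:
  assumes j: "j \<in> J"
  shows "\<exists>t. \<forall>i\<in>J. (\<Sum>w\<in>Z. dual w i * t w) = (if i = j then 1 else 0)"
proof (rule square_system_solvable[OF finite_J finite_Z card_J])
  fix c assume c: "\<forall>i\<in>J. (\<Sum>w\<in>Z. dual w i * c w) = 0"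
  show "\<forall>u\<in>Z. c u = 0"
  proof
    fix u assume u: "u \<in> Z"
    have "c u * gram u u = 0" using sum_gram[OF u, of c] c by simp
    then show "c u = 0" using gram_pos[OF u] by simp
  qed
qed

lemma form_eq_atomic_col:
  assumes a: "a < S" and j: "j \<in> J"
  shows "B a j = (\<Sum>w\<in>Z. e w a * e w j / gram w w)"
proof -
  obtain t where t: "\<forall>i\<in>J. (\<Sum>w\<in>Z. dual w i * t w) = (if i = j then 1 else 0)"
    using ex_dual_inverse[OF j] by blast
  have t_eq: "t w = e w j / gram w w" if w: "w \<in> Z" for w
  proof -
    have "t w * gram w w = (\<Sum>i\<in>J. e w i * (if i = j then 1 else 0))"
      using sum_gram[OF w, of t] t by simp
    also have "\<dots> = e w j" using j finite_J by (simp add: if_distrib cong: if_cong)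
    finally show ?thesis using gram_pos[OF w] by (simp add: field_simps)
  qed
  have "B a j = (\<Sum>i\<in>J. B a i * (if i = j then 1 else 0))"
    using j finite_J by (simp add: if_distrib cong: if_cong)
  also have "\<dots> = (\<Sum>i\<in>J. B a i * (\<Sum>w\<in>Z. dual w i * t w))"
    using t by simp
  also have "\<dots> = (\<Sum>w\<in>Z. t w * (\<Sum>i\<in>J. B a i * dual w i))"
    by (simp add: sum_distrib_left mult_ac) (rule sum.swap)
  also have "\<dots> = (\<Sum>w\<in>Z. e w a * e w j / gram w w)"
    by (intro sum.cong) (simp_all add: form_dual[OF _ a] t_eq)
  finally show ?thesis .
qed

lemma form_eq_atomic:
  assumes a: "a < S" and b: "b < S"
  shows "B a b = (\<Sum>w\<in>Z. e w a * e w b / gram w w)"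
proof -
  have "B a b = (\<Sum>j\<in>J. \<Sum>w\<in>Z. coef b j * (e w a * e w j / gram w w))"
    using span[OF b a] J_subset by (simp add: form_eq_atomic_col[OF a] sum_distrib_left subset_iff)
  also have "\<dots> = (\<Sum>w\<in>Z. \<Sum>j\<in>J. coef b j * (e w a * e w j / gram w w))"
    by (rule sum.swap)
  also have "\<dots> = (\<Sum>w\<in>Z. e w a / gram w w * (\<Sum>j\<in>J. coef b j * e w j))"
    by (intro sum.cong refl) (simp add: sum_distrib_left sum_divide_distrib mult_ac)
  also have "\<dots> = (\<Sum>w\<in>Z. e w a * e w b / gram w w)"
    by (intro sum.cong) (simp_all add: e_eq_coef_sum[OF _ b])
  finally show ?thesis .
qed

lemma ex_atomic_decomposition:
  "\<exists>g. (\<forall>w\<in>Z. 0 < g w) \<and> (\<forall>a<S. \<forall>b<S. B a b = (\<Sum>w\<in>Z. g w * e w a * e w b))"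
  by (rule exI[of _ "\<lambda>w. 1 / gram w w"]) (simp add: gram_pos form_eq_atomic)

end

section \<open>Monomials and moment matrices\<close>

lemma mons_Suc: "mons (Suc m) = mons m @ map (\<lambda>i. (i, Suc m - i)) (rev [0..<Suc (Suc m)])"
  unfolding mons_def by simp

lemma set_mons: "set (mons m) = {(i, j). i + j \<le> m}"
proof (induction m)
  case 0
  then show ?case by (auto simp: mons_def)
next
  case (Suc m)
  show ?case unfolding mons_Suc set_append Suc by force
qed

lemma msize_Suc: "msize (Suc m) = msize m + (m + 2)"
  unfolding msize_def mons_Suc by simp

lemma msize_pos: "0 < msize m"
  by (induction m) (auto simp: msize_def mons_def)

lemma mons_Suc_nth: "a < msize m \<Longrightarrow> mons (Suc m) ! a = mons m ! a"
  unfolding mons_Suc msize_def by (simp add: nth_append)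

lemma mons_nth_0: "mons m ! 0 = (0, 0)"
proof (induction m)
  case 0
  then show ?case by (simp add: mons_def)
next
  case (Suc m)
  then show ?case using mons_Suc_nth[of 0 m] msize_pos[of m] by simp
qed

lemma mons_nth_deg: "a < msize m \<Longrightarrow> fst (mons m ! a) + snd (mons m ! a) \<le> m"
  using nth_mem[of a "mons m"] unfolding msize_def set_mons by auto

definition mon_idx :: "nat \<Rightarrow> nat \<times> nat \<Rightarrow> nat" where
  "mon_idx m p = (SOME a. a < msize m \<and> mons m ! a = p)"

lemma mon_idx:
  assumes "fst p + snd p \<le> m"
  shows "mon_idx m p < msize m \<and> mons m ! mon_idx m p = p"
proof -
  have "p \<in> set (mons m)" using assms unfolding set_mons by auto
  then have "\<exists>a. a < msize m \<and> mons m ! a = p" unfolding msize_def by (metis in_set_conv_nth)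
  then show ?thesis unfolding mon_idx_def by (rule someI_ex)
qed

lemma mons_split:
  assumes "i + j \<le> 2 * n"
  shows "\<exists>a<msize n. \<exists>b<msize n. fst (mons n ! a) + fst (mons n ! b) = i \<and> snd (mons n ! a) + snd (mons n ! b) = j"
proof -
  define i1 where "i1 = min i n"
  define j1 where "j1 = min j (n - i1)"
  have "i1 + j1 \<le> n" "(i - i1) + (j - j1) \<le> n" using assms unfolding i1_def j1_def by auto
  then show ?thesis
    using mon_idx[of "(i1, j1)" n] mon_idx[of "(i - i1, j - j1)" n] unfolding i1_def j1_def
    by (metis fst_conv snd_conv le_add_diff_inverse min.cobounded1)
qed

definition moment_entry :: "nat \<Rightarrow> (nat \<Rightarrow> nat \<Rightarrow> real) \<Rightarrow> nat \<Rightarrow> nat \<Rightarrow> real" where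
  "moment_entry m \<gamma> a b = \<gamma> (fst (mons m ! a) + fst (mons m ! b)) (snd (mons m ! a) + snd (mons m ! b))"

lemma moment_matrix_carrier: "moment_matrix m \<gamma> \<in> carrier_mat (msize m) (msize m)"
  unfolding moment_matrix_def by simp

lemma dim_moment_matrix [simp]:
  "dim_row (moment_matrix m \<gamma>) = msize m" "dim_col (moment_matrix m \<gamma>) = msize m"
  unfolding moment_matrix_def by simp_all

lemma moment_matrix_nth:
  "a < msize m \<Longrightarrow> b < msize m \<Longrightarrow> moment_matrix m \<gamma> $$ (a, b) = moment_entry m \<gamma> a b"
  unfolding moment_matrix_def moment_entry_def by simp

lemma sum_moment_matrix_nth:
  "a < msize m \<Longrightarrow> J \<subseteq> {..<msize m} \<Longrightarrow>
    (\<Sum>j\<in>J. y j * moment_matrix m \<gamma> $$ (a, j)) = (\<Sum>j\<in>J. y j * moment_entry m \<gamma> a j)"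
  by (intro sum.cong refl) (auto simp: moment_matrix_nth)

lemma cols_indep_moment_matrix_iff:
  assumes "J \<subseteq> {..<msize m}"
  shows "cols_indep (moment_matrix m \<gamma>) J \<longleftrightarrow>
    (\<forall>y. (\<forall>a<msize m. (\<Sum>j\<in>J. y j * moment_entry m \<gamma> a j) = 0) \<longrightarrow> (\<forall>j\<in>J. y j = 0))"
  unfolding cols_indep_def using sum_moment_matrix_nth[OF _ assms] by simp

lemma moment_entry_sym: "moment_entry m \<gamma> a b = moment_entry m \<gamma> b a"
  unfolding moment_entry_def by (simp add: add.commute)

lemma moment_matrix_mult_vec_nth:
  "a < msize m \<Longrightarrow> v \<in> carrier_vec (msize m) \<Longrightarrow>
    (moment_matrix m \<gamma> *\<^sub>v v) $ a = (\<Sum>b<msize m. moment_entry m \<gamma> a b * v $ b)"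
  by (auto simp: mult_mat_vec_def scalar_prod_def atLeast0LessThan moment_matrix_def
      moment_entry_def intro!: sum.cong)

definition mon_val :: "nat \<Rightarrow> real \<times> real \<Rightarrow> nat \<Rightarrow> real" where
  "mon_val m z a = fst z ^ fst (mons m ! a) * snd z ^ snd (mons m ! a)"

definition poly_val :: "nat \<Rightarrow> (nat \<Rightarrow> real) \<Rightarrow> real \<times> real \<Rightarrow> real" where
  "poly_val m c z = (\<Sum>a<msize m. c a * mon_val m z a)"

definition in_moment_kernel :: "nat \<Rightarrow> (nat \<Rightarrow> nat \<Rightarrow> real) \<Rightarrow> (nat \<Rightarrow> real) \<Rightarrow> bool" where
  "in_moment_kernel m \<gamma> c \<longleftrightarrow> (\<forall>a<msize m. (\<Sum>b<msize m. moment_entry m \<gamma> a b * c b) = 0)"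

lemma in_moment_kernel_iff:
  "v \<in> carrier_vec (msize m) \<Longrightarrow>
    moment_matrix m \<gamma> *\<^sub>v v = 0\<^sub>v (msize m) \<longleftrightarrow> in_moment_kernel m \<gamma> (\<lambda>b. v $ b)"
  unfolding in_moment_kernel_def
  by (simp add: vec_eq_iff moment_matrix_mult_vec_nth del: index_mult_mat_vec)

lemma poly_eval_eq_poly_val: "poly_eval m v z = poly_val m (\<lambda>a. v $ a) z"
  unfolding poly_eval_def poly_val_def mon_val_def by (cases z) (simp add: mult.assoc)

lemma mem_variety_iff:
  "z \<in> variety m \<gamma> \<longleftrightarrow> (\<forall>c. in_moment_kernel m \<gamma> c \<longrightarrow> poly_val m c z = 0)"
proof
  assume z: "z \<in> variety m \<gamma>"
  show "\<forall>c. in_moment_kernel m \<gamma> c \<longrightarrow> poly_val m c z = 0"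
  proof (intro allI impI)
    fix c assume c: "in_moment_kernel m \<gamma> c"
    let ?v = "vec (msize m) c"
    have "in_moment_kernel m \<gamma> (\<lambda>b. ?v $ b)"
      using c unfolding in_moment_kernel_def by simp
    then have "moment_matrix m \<gamma> *\<^sub>v ?v = 0\<^sub>v (msize m)"
      using in_moment_kernel_iff[of ?v] by simp
    then have "{z. poly_eval m ?v z = 0} \<in> {{z. poly_eval m c z = 0} | c.
        c \<in> carrier_vec (msize m) \<and> moment_matrix m \<gamma> *\<^sub>v c = 0\<^sub>v (msize m)}"
      by auto
    then have "poly_eval m ?v z = 0" using z unfolding variety_def by blast
    then show "poly_val m c z = 0" by (simp add: poly_eval_eq_poly_val poly_val_def)
  qed
next
  assume h: "\<forall>c. in_moment_kernel m \<gamma> c \<longrightarrow> poly_val m c z = 0"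
  show "z \<in> variety m \<gamma>" unfolding variety_def
  proof (intro InterI, clarify)
    fix v assume "v \<in> carrier_vec (msize m)" "moment_matrix m \<gamma> *\<^sub>v v = 0\<^sub>v (msize m)"
    then have "in_moment_kernel m \<gamma> (\<lambda>b. v $ b)" using in_moment_kernel_iff by blast
    then show "poly_eval m v z = 0" using h by (simp add: poly_eval_eq_poly_val)
  qed
qed

definition moment_form :: "nat \<Rightarrow> (nat \<Rightarrow> nat \<Rightarrow> real) \<Rightarrow> (nat \<Rightarrow> real) \<Rightarrow> real" where
  "moment_form m \<gamma> c = (\<Sum>a<msize m. \<Sum>b<msize m. c a * moment_entry m \<gamma> a b * c b)"

lemma psd_moment_matrix_iff: "psd (moment_matrix m \<gamma>) \<longleftrightarrow> (\<forall>c. 0 \<le> moment_form m \<gamma> c)"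
proof -
  have quad: "v \<bullet> (moment_matrix m \<gamma> *\<^sub>v v) = moment_form m \<gamma> (\<lambda>a. v $ a)"
    if v: "v \<in> carrier_vec (msize m)" for v
  proof -
    have "v \<bullet> (moment_matrix m \<gamma> *\<^sub>v v) = (\<Sum>a<msize m. v $ a * (moment_matrix m \<gamma> *\<^sub>v v) $ a)"
      by (simp add: scalar_prod_def atLeast0LessThan)
    then show ?thesis
      using v unfolding moment_form_def
      by (simp add: moment_matrix_mult_vec_nth sum_distrib_left mult.assoc del: index_mult_mat_vec)
  qed
  have "moment_form m \<gamma> c = moment_form m \<gamma> (\<lambda>a. vec (msize m) c $ a)" for c
    unfolding moment_form_def by (intro sum.cong) auto
  then show ?thesis
    unfolding psd_def using quad by (auto simp: moment_matrix_def) (metis vec_carrier)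
qed

lemma moment_form_eq_0_if_kernel: "in_moment_kernel m \<gamma> c \<Longrightarrow> moment_form m \<gamma> c = 0"
  unfolding in_moment_kernel_def moment_form_def by (simp add: mult.assoc flip: sum_distrib_left)

lemma moment_form_eq_0_imp_kernel:
  "psd (moment_matrix m \<gamma>) \<Longrightarrow> moment_form m \<gamma> c = 0 \<Longrightarrow> in_moment_kernel m \<gamma> c"
  using psd_form_eq_0_imp_kernel[of "moment_entry m \<gamma>" "msize m" c] moment_entry_sym
  unfolding psd_moment_matrix_iff in_moment_kernel_def moment_form_def by blast

section \<open>Atomic moment sequences\<close>

definition atomic_moments :: "(real \<times> real) set \<Rightarrow> (real \<times> real \<Rightarrow> real) \<Rightarrow> nat \<Rightarrow> nat \<Rightarrow> real" where
  "atomic_moments V w i j = (\<Sum>v\<in>V. w v * (fst v ^ i * snd v ^ j))"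

lemma moment_entry_atomic:
  "moment_entry m (atomic_moments V w) a b = (\<Sum>v\<in>V. w v * mon_val m v a * mon_val m v b)"
  unfolding moment_entry_def atomic_moments_def mon_val_def
  by (intro sum.cong) (simp_all add: power_add mult_ac)

lemma moment_form_atomic:
  "moment_form m (atomic_moments V w) c = (\<Sum>v\<in>V. w v * (poly_val m c v)\<^sup>2)"
  unfolding moment_form_def moment_entry_atomic poly_val_def power2_eq_square sum_product
  by (simp add: sum_distrib_left mult_ac sum.swap[of _ V])

lemma psd_atomic:
  "(\<And>v. v \<in> V \<Longrightarrow> 0 \<le> w v) \<Longrightarrow> psd (moment_matrix m (atomic_moments V w))"
  unfolding psd_moment_matrix_iff moment_form_atomic by (simp add: sum_nonneg)

lemma support_subset_variety_atomic:
  assumes V: "finite V" and w: "\<And>v. v \<in> V \<Longrightarrow> 0 \<le> w v"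
  shows "{v\<in>V. w v \<noteq> 0} \<subseteq> variety m (atomic_moments V w)"
proof
  fix z assume z: "z \<in> {v\<in>V. w v \<noteq> 0}"
  show "z \<in> variety m (atomic_moments V w)" unfolding mem_variety_iff
  proof (intro allI impI)
    fix c assume "in_moment_kernel m (atomic_moments V w) c"
    then have "moment_form m (atomic_moments V w) c = 0" by (rule moment_form_eq_0_if_kernel)
    then have "\<forall>v\<in>V. w v * (poly_val m c v)\<^sup>2 = 0"
      unfolding moment_form_atomic using V w by (simp add: sum_nonneg_eq_0_iff)
    then show "poly_val m c z = 0" using z by auto
  qed
qed

lemma rank_atomic_le:
  assumes V: "finite V"
  shows "mm_rank m (atomic_moments V w) \<le> card {v\<in>V. w v \<noteq> 0}"
  unfolding mm_rank_def
proof (rule vec_space.rank_le_card_if_cols_in_span[OF moment_matrix_carrier])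
  let ?P = "{v\<in>V. w v \<noteq> 0}"
  show "finite ?P" using V by simp
  fix k assume k: "k < msize m"
  have "moment_matrix m (atomic_moments V w) $$ (i, k)
      = (\<Sum>v\<in>?P. (w v * mon_val m v k) * vec (msize m) (mon_val m v) $ i)" if i: "i < msize m" for i
    using i k V by (simp add: moment_matrix_nth moment_entry_atomic sum.mono_neutral_right[of V ?P] mult_ac)
  then show "\<exists>c. \<forall>i<msize m. moment_matrix m (atomic_moments V w) $$ (i, k)
      = (\<Sum>v\<in>?P. c v * vec (msize m) (mon_val m v) $ i)"
    by (intro exI[of _ "\<lambda>v. w v * mon_val m v k"]) blast
qed simp

lemma representing_measure_atomic:
  fixes Z :: "(real \<times> real) set"
  assumes Z: "finite Z" and w: "\<And>z. z \<in> Z \<Longrightarrow> 0 \<le> w z"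
    and mom: "\<And>i j. i + j \<le> 2 * n \<Longrightarrow> \<beta> i j = atomic_moments Z w i j"
  shows "representing_measure n \<beta> (distr (point_measure Z w) borel (\<lambda>z. z))"
proof -
  have meas: "(\<lambda>z. z) \<in> measurable (point_measure Z w) borel" by simp
  have bm: "(\<lambda>z::real \<times> real. fst z ^ i * snd z ^ j) \<in> borel_measurable borel" for i j
    by (intro borel_measurable_continuous_onI continuous_intros)
  show ?thesis unfolding representing_measure_def
  proof (intro conjI allI impI)
    fix i j :: nat assume ij: "i + j \<le> 2 * n"
    show "integrable (distr (point_measure Z w) borel (\<lambda>z. z)) (\<lambda>z. fst z ^ i * snd z ^ j)"
      using integrable_distr_eq[OF meas bm] integrable_point_measure_finite[OF Z] by simp
    show "(\<integral>z. fst z ^ i * snd z ^ j \<partial>distr (point_measure Z w) borel (\<lambda>z. z)) = \<beta> i j"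
      using integral_distr[OF meas bm] mom[OF ij] unfolding atomic_moments_def
      by (simp add: lebesgue_integral_point_measure_finite[where f = w, OF Z w])
  qed simp
qed

section \<open>Representing measures live on the variety\<close>

lemma AE_poly_val_eq_0:
  assumes rep: "representing_measure n \<beta> \<mu>" and ker: "in_moment_kernel n \<beta> c"
  shows "AE z in \<mu>. poly_val n c z = 0"
proof -
  let ?s = "msize n"
  let ?mon = "\<lambda>a b z. fst z ^ (fst (mons n ! a) + fst (mons n ! b)) * snd z ^ (snd (mons n ! a) + snd (mons n ! b))"
  have sq: "(poly_val n c z)\<^sup>2 = (\<Sum>a<?s. \<Sum>b<?s. c a * c b * ?mon a b z)" for z
    unfolding poly_val_def power2_eq_square sum_product mon_val_def
    by (intro sum.cong refl) (simp add: power_add mult_ac)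
  have mon: "integrable \<mu> (?mon a b)" "integral\<^sup>L \<mu> (?mon a b) = moment_entry n \<beta> a b"
    if "a < ?s" "b < ?s" for a b
    using rep mons_nth_deg[OF that(1)] mons_nth_deg[OF that(2)]
    unfolding representing_measure_def moment_entry_def by auto
  have int: "integrable \<mu> (\<lambda>z. (poly_val n c z)\<^sup>2)"
    unfolding sq using mon(1) by (auto intro!: Bochner_Integration.integrable_sum)
  have row_int: "integrable \<mu> (\<lambda>z. \<Sum>b<?s. c a * c b * ?mon a b z)"
    "integral\<^sup>L \<mu> (\<lambda>z. \<Sum>b<?s. c a * c b * ?mon a b z) = (\<Sum>b<?s. c a * moment_entry n \<beta> a b * c b)"
    if a: "a < ?s" for a
    using mon a by (auto simp: Bochner_Integration.integral_sum mult_ac)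
  have "integral\<^sup>L \<mu> (\<lambda>z. (poly_val n c z)\<^sup>2) = moment_form n \<beta> c"
    unfolding sq moment_form_def using row_int
    by (simp add: Bochner_Integration.integral_sum)
  also have "\<dots> = 0" using ker by (rule moment_form_eq_0_if_kernel)
  finally have "AE z in \<mu>. (poly_val n c z)\<^sup>2 = 0"
    using integral_nonneg_eq_0_iff_AE[OF int] by simp
  then show ?thesis by simp
qed

text \<open>The kernel may be uncountable; Lindelof reduces to countably many null sets.\<close>

lemma AE_in_variety:
  assumes rep: "representing_measure n \<beta> \<mu>"
  shows "AE z in \<mu>. z \<in> variety n \<beta>"
proof -
  define F where "F = {{z. poly_val n c z \<noteq> 0} | c. in_moment_kernel n \<beta> c}"
  have "open U" if "U \<in> F" for U
    using that unfolding F_def poly_val_def mon_val_def by (auto intro!: open_Collect_neq continuous_intros)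
  then obtain F' where F': "F' \<subseteq> F" "countable F'" "\<Union>F' = \<Union>F" using Lindelof by metis
  have "AE z in \<mu>. z \<notin> U" if "U \<in> F'" for U
    using that F' AE_poly_val_eq_0[OF rep] unfolding F_def by auto
  then have "AE z in \<mu>. \<forall>U\<in>F'. z \<notin> U" by (intro AE_ball_countable[OF F'(2), THEN iffD2]) blast
  then show ?thesis
  proof (rule AE_mp, intro AE_I2 impI)
    fix z assume "\<forall>U\<in>F'. z \<notin> U"
    then have "z \<notin> \<Union>F" using F'(3) by blast
    then show "z \<in> variety n \<beta>" unfolding mem_variety_iff F_def by auto
  qed
qed

lemma moments_eq_atomic_variety:
  assumes rep: "representing_measure n \<beta> \<mu>" and finV: "finite (variety n \<beta>)"
    and ij: "i + j \<le> 2 * n"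
  shows "\<beta> i j = atomic_moments (variety n \<beta>) (\<lambda>v. measure \<mu> {v}) i j"
proof -
  let ?V = "variety n \<beta>"
  have sets: "sets \<mu> = sets borel" using rep unfolding representing_measure_def by simp
  have "integrable \<mu> (\<lambda>z::real \<times> real. fst z ^ 0 * snd z ^ 0)"
    using rep unfolding representing_measure_def by (metis le0 add_0)
  then have "emeasure \<mu> (space \<mu>) < \<infinity>" unfolding integrable_iff_bounded by simp
  then have finv: "emeasure \<mu> {v} < \<infinity>" for v
    using emeasure_space[of \<mu> "{v}"] by (metis order_le_less_trans)
  let ?f = "\<lambda>z::real \<times> real. fst z ^ i * snd z ^ j"
  let ?g = "\<lambda>z. \<Sum>v\<in>?V. ?f v * indicator {v} z"
  have fi: "integrable \<mu> ?f" and fb: "integral\<^sup>L \<mu> ?f = \<beta> i j"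
    using rep ij unfolding representing_measure_def by auto
  have gi: "integrable \<mu> (\<lambda>z. ?f v * indicator {v} z)" for v
    using sets finv by (intro integrable_mult_right) auto
  have "AE z in \<mu>. ?f z = ?g z"
  proof (rule AE_mp[OF AE_in_variety[OF rep]], intro AE_I2 impI)
    fix z assume z: "z \<in> ?V"
    have "?g z = (\<Sum>v\<in>?V. if v = z then ?f v else 0)" by (intro sum.cong refl) auto
    also have "\<dots> = ?f z" using z finV by simp
    finally show "?f z = ?g z" by simp
  qed
  moreover have "integrable \<mu> ?g" using gi by (intro Bochner_Integration.integrable_sum)
  ultimately have "integral\<^sup>L \<mu> ?f = integral\<^sup>L \<mu> ?g"
    using fi by (intro integral_cong_AE) (auto intro: borel_measurable_integrable)
  also have "\<dots> = (\<Sum>v\<in>?V. integral\<^sup>L \<mu> (\<lambda>z. ?f v * indicator {v} z))"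
    by (rule Bochner_Integration.integral_sum) (use gi in blast)
  also have "\<dots> = (\<Sum>v\<in>?V. measure \<mu> {v} * ?f v)"
    using sets finv by (simp add: mult.commute)
  finally show ?thesis using fb unfolding atomic_moments_def by simp
qed

section \<open>Extensions of moment matrices\<close>

lemma moment_entry_Suc:
  assumes agree: "\<forall>i j. i + j \<le> 2 * n \<longrightarrow> \<beta>' i j = \<beta> i j" and "a < msize n" "b < msize n"
  shows "moment_entry (Suc n) \<beta>' a b = moment_entry n \<beta> a b"
  using assms mons_nth_deg[of a n] mons_nth_deg[of b n] by (simp add: moment_entry_def mons_Suc_nth)

lemma mon_val_Suc: "a < msize n \<Longrightarrow> mon_val (Suc n) z a = mon_val n z a"
  unfolding mon_val_def by (simp add: mons_Suc_nth)

lemma msize_le_Suc: "msize n \<le> msize (Suc n)"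
  by (simp add: msize_Suc)

lemma lessThan_msize_subset_Suc: "J \<subseteq> {..<msize n} \<Longrightarrow> J \<subseteq> {..<msize (Suc n)}"
  using msize_le_Suc[of n] by (meson lessThan_iff order_less_le_trans subset_iff)

definition shift_x :: "nat \<Rightarrow> nat \<Rightarrow> nat" where
  "shift_x n k = mon_idx (Suc n) (fst (mons n ! k) + 1, snd (mons n ! k))"

definition shift_y :: "nat \<Rightarrow> nat \<Rightarrow> nat" where
  "shift_y n k = mon_idx (Suc n) (fst (mons n ! k), snd (mons n ! k) + 1)"

lemma shift_x:
  "k < msize n \<Longrightarrow> shift_x n k < msize (Suc n) \<and>
    mons (Suc n) ! shift_x n k = (fst (mons n ! k) + 1, snd (mons n ! k))"
  unfolding shift_x_def using mons_nth_deg[of k n] by (intro mon_idx) simp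

lemma shift_y:
  "k < msize n \<Longrightarrow> shift_y n k < msize (Suc n) \<and>
    mons (Suc n) ! shift_y n k = (fst (mons n ! k), snd (mons n ! k) + 1)"
  unfolding shift_y_def using mons_nth_deg[of k n] by (intro mon_idx) simp

lemma mon_val_shift:
  assumes "k < msize n"
  shows "mon_val (Suc n) z (shift_x n k) = fst z * mon_val (Suc n) z k"
    and "mon_val (Suc n) z (shift_y n k) = snd z * mon_val (Suc n) z k"
  using shift_x[OF assms] shift_y[OF assms] mons_Suc_nth[OF assms] unfolding mon_val_def by simp_all

lemma moment_entry_shift_sym:
  assumes "k < msize n" "l < msize n"
  shows "moment_entry (Suc n) \<gamma> (shift_x n k) l = moment_entry (Suc n) \<gamma> (shift_x n l) k"
    and "moment_entry (Suc n) \<gamma> (shift_y n k) l = moment_entry (Suc n) \<gamma> (shift_y n l) k"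
  using shift_x[OF assms(1)] shift_x[OF assms(2)] shift_y[OF assms(1)] shift_y[OF assms(2)]
    mons_Suc_nth[OF assms(1)] mons_Suc_nth[OF assms(2)]
  unfolding moment_entry_def by (simp_all add: add_ac)

lemma variety_Suc_subset:
  assumes agree: "\<forall>i j. i + j \<le> 2 * n \<longrightarrow> \<beta>' i j = \<beta> i j"
    and psd: "psd (moment_matrix (Suc n) \<beta>')"
  shows "variety (Suc n) \<beta>' \<subseteq> variety n \<beta>"
proof
  fix z assume z: "z \<in> variety (Suc n) \<beta>'"
  have sub: "{..<msize n} \<subseteq> {..<msize (Suc n)}" using msize_le_Suc by auto
  show "z \<in> variety n \<beta>" unfolding mem_variety_iff
  proof (intro allI impI)
    fix c assume ker: "in_moment_kernel n \<beta> c"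
    let ?c = "\<lambda>b. if b \<in> {..<msize n} then c b else 0"
    have "moment_form (Suc n) \<beta>' ?c = (\<Sum>a<msize n. c a * (\<Sum>b<msize n. moment_entry n \<beta> a b * c b))"
      unfolding moment_form_def form_restrict[OF sub] by (simp add: moment_entry_Suc[OF agree])
    also have "\<dots> = 0" using ker unfolding in_moment_kernel_def by simp
    finally have "poly_val (Suc n) ?c z = 0"
      using z moment_form_eq_0_imp_kernel[OF psd] unfolding mem_variety_iff by blast
    moreover have "poly_val (Suc n) ?c z
        = (\<Sum>a<msize (Suc n). if a \<in> {..<msize n} then c a * mon_val n z a else 0)"
      unfolding poly_val_def by (intro sum.cong) (auto simp: mon_val_Suc)
    ultimately show "poly_val n c z = 0"
      unfolding sum_lessThan_if_mem[OF sub] poly_val_def by simp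
  qed
qed

lemma psd_extension_flat_basis:
  assumes agree: "\<forall>i j. i + j \<le> 2 * n \<longrightarrow> \<beta>' i j = \<beta> i j"
    and psd: "psd (moment_matrix (Suc n) \<beta>')"
    and finV: "finite (variety n \<beta>)" and cardV: "card (variety n \<beta>) = mm_rank n \<beta>"
    and rank: "infinite (variety (Suc n) \<beta>') \<or> mm_rank (Suc n) \<beta>' \<le> card (variety (Suc n) \<beta>')"
  obtains J where "J \<subseteq> {..<msize n}" "card J = card (variety (Suc n) \<beta>')"
    "finite (variety (Suc n) \<beta>')" "cols_indep (moment_matrix (Suc n) \<beta>') J"
    "mm_rank (Suc n) \<beta>' \<le> card J"
proof -
  let ?s = "msize n" and ?S = "msize (Suc n)" and ?Z = "variety (Suc n) \<beta>'"
  let ?A = "moment_matrix n \<beta>" and ?B = "moment_matrix (Suc n) \<beta>'"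
  have ZV: "?Z \<subseteq> variety n \<beta>" by (rule variety_Suc_subset[OF agree psd])
  have fZ: "finite ?Z" using finite_subset[OF ZV finV] .
  obtain J where J: "J \<subseteq> {..<?s}" "card J = mm_rank n \<beta>" and indA: "cols_indep ?A J"
    using vec_space.ex_cols_indep_card_rank[OF moment_matrix_carrier] unfolding mm_rank_def by blast
  have JS: "J \<subseteq> {..<?S}" using J(1) by (rule lessThan_msize_subset_Suc)
  have indB: "cols_indep ?B J" unfolding cols_indep_moment_matrix_iff[OF JS]
  proof (intro allI impI)
    fix y assume y: "\<forall>a<?S. (\<Sum>j\<in>J. y j * moment_entry (Suc n) \<beta>' a j) = 0"
    have "(\<Sum>j\<in>J. y j * moment_entry n \<beta> a j) = 0" if a: "a < ?s" for a
    proof -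
      have "(\<Sum>j\<in>J. y j * moment_entry n \<beta> a j) = (\<Sum>j\<in>J. y j * moment_entry (Suc n) \<beta>' a j)"
        using a J(1) by (intro sum.cong refl) (auto simp: moment_entry_Suc[OF agree])
      then show ?thesis using y a msize_le_Suc[of n] by simp
    qed
    then show "\<forall>j\<in>J. y j = 0" using indA unfolding cols_indep_moment_matrix_iff[OF J(1)] by blast
  qed
  have "card J \<le> mm_rank (Suc n) \<beta>'"
    unfolding mm_rank_def by (rule vec_space.card_le_rank_if_cols_indep[OF moment_matrix_carrier JS indB])
  moreover have "mm_rank (Suc n) \<beta>' \<le> card ?Z" using rank fZ by simp
  moreover have "card ?Z \<le> card J" using card_mono[OF finV ZV] cardV J(2) by simp
  ultimately show ?thesis using that J(1) fZ indB by simp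
qed

lemma psd_extension_atomic:
  assumes agree: "\<forall>i j. i + j \<le> 2 * n \<longrightarrow> \<beta>' i j = \<beta> i j"
    and psd: "psd (moment_matrix (Suc n) \<beta>')"
    and finV: "finite (variety n \<beta>)" and cardV: "card (variety n \<beta>) = mm_rank n \<beta>"
    and rank: "infinite (variety (Suc n) \<beta>') \<or> mm_rank (Suc n) \<beta>' \<le> card (variety (Suc n) \<beta>')"
  obtains g where "finite (variety (Suc n) \<beta>')" "\<forall>w\<in>variety (Suc n) \<beta>'. 0 < g w"
    "\<forall>a<msize (Suc n). \<forall>b<msize (Suc n). moment_entry (Suc n) \<beta>' a b
       = (\<Sum>w\<in>variety (Suc n) \<beta>'. g w * mon_val (Suc n) w a * mon_val (Suc n) w b)"
proof -
  let ?S = "msize (Suc n)" and ?Z = "variety (Suc n) \<beta>'" and ?B = "moment_matrix (Suc n) \<beta>'"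
  obtain J where J: "J \<subseteq> {..<msize n}" and card_J: "card J = card ?Z" and fZ: "finite ?Z"
    and indB: "cols_indep ?B J" and rank_J: "mm_rank (Suc n) \<beta>' \<le> card J"
    using psd_extension_flat_basis[OF assms] .
  have JS: "J \<subseteq> {..<?S}" using J by (rule lessThan_msize_subset_Suc)
  have "\<forall>k<?S. \<exists>c. \<forall>a<?S. moment_entry (Suc n) \<beta>' a k = (\<Sum>j\<in>J. c j * moment_entry (Suc n) \<beta>' a j)"
    using vec_space.col_in_span_if_cols_indep[OF moment_matrix_carrier JS _ indB] rank_J
      sum_moment_matrix_nth[OF _ JS] by (simp add: mm_rank_def moment_matrix_nth)
  then obtain coef where coef: "\<And>k a. k < ?S \<Longrightarrow> a < ?S \<Longrightarrow>
      moment_entry (Suc n) \<beta>' a k = (\<Sum>j\<in>J. coef k j * moment_entry (Suc n) \<beta>' a j)"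
    by metis
  have J_less: "k \<in> J \<Longrightarrow> k < msize n" for k using J by auto
  interpret flat_form ?S "moment_entry (Suc n) \<beta>'" J ?Z "mon_val (Suc n)" coef "shift_x n" "shift_y n"
  proof
    show "0 \<le> (\<Sum>a<?S. \<Sum>b<?S. c a * moment_entry (Suc n) \<beta>' a b * c b)" for c
      using psd unfolding psd_moment_matrix_iff moment_form_def by blast
    show "\<forall>j\<in>J. y j = 0" if "\<forall>a<?S. (\<Sum>j\<in>J. y j * moment_entry (Suc n) \<beta>' a j) = 0" for y
      using that indB unfolding cols_indep_moment_matrix_iff[OF JS] by blast
    show "(\<Sum>a<?S. c a * mon_val (Suc n) z a) = 0"
      if "z \<in> ?Z" "\<forall>a<?S. (\<Sum>b<?S. moment_entry (Suc n) \<beta>' a b * c b) = 0" for z c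
      using that unfolding mem_variety_iff in_moment_kernel_def poly_val_def by blast
    show "mon_val (Suc n) z 0 = 1" for z unfolding mon_val_def by (simp add: mons_nth_0)
  qed (use JS fZ card_J moment_entry_sym msize_pos shift_x shift_y J_less coef
      moment_entry_shift_sym mon_val_shift in auto)
  from ex_atomic_decomposition that fZ show ?thesis by blast
qed

lemma representing_measure_if_psd_extension:
  assumes agree: "\<forall>i j. i + j \<le> 2 * n \<longrightarrow> \<beta>' i j = \<beta> i j"
    and psd: "psd (moment_matrix (Suc n) \<beta>')"
    and finV: "finite (variety n \<beta>)" and cardV: "card (variety n \<beta>) = mm_rank n \<beta>"
    and rank: "infinite (variety (Suc n) \<beta>') \<or> mm_rank (Suc n) \<beta>' \<le> card (variety (Suc n) \<beta>')"
  shows "\<exists>\<mu>. representing_measure n \<beta> \<mu>"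
proof -
  let ?Z = "variety (Suc n) \<beta>'"
  obtain g where fZ: "finite ?Z" and g: "\<forall>w\<in>?Z. 0 < g w"
    and dec: "\<forall>a<msize (Suc n). \<forall>b<msize (Suc n). moment_entry (Suc n) \<beta>' a b
       = (\<Sum>w\<in>?Z. g w * mon_val (Suc n) w a * mon_val (Suc n) w b)"
    using psd_extension_atomic[OF assms] .
  have "\<beta> i j = atomic_moments ?Z g i j" if ij: "i + j \<le> 2 * n" for i j
  proof -
    obtain a b where ab: "a < msize n" "b < msize n" "fst (mons n ! a) + fst (mons n ! b) = i"
      "snd (mons n ! a) + snd (mons n ! b) = j"
      using mons_split[OF ij] by blast
    have "\<beta> i j = moment_entry (Suc n) \<beta>' a b"
      using ab moment_entry_Suc[OF agree] unfolding moment_entry_def by simp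
    also have "\<dots> = moment_entry (Suc n) (atomic_moments ?Z g) a b"
      using dec ab msize_le_Suc[of n] by (simp add: moment_entry_atomic)
    also have "\<dots> = atomic_moments ?Z g i j"
      using ab by (simp add: moment_entry_def mons_Suc_nth)
    finally show ?thesis .
  qed
  then have "representing_measure n \<beta> (distr (point_measure ?Z g) borel (\<lambda>z. z))"
    using g by (intro representing_measure_atomic[OF fZ]) auto
  then show ?thesis by blast
qed

lemma psd_extension_if_representing_measure:
  assumes rep: "representing_measure n \<beta> \<mu>" and finV: "finite (variety n \<beta>)"
  shows "\<exists>\<beta>'. (\<forall>i j. i + j \<le> 2 * n \<longrightarrow> \<beta>' i j = \<beta> i j) \<and> psd (moment_matrix (Suc n) \<beta>') \<and>
    (infinite (variety (Suc n) \<beta>') \<or> mm_rank (Suc n) \<beta>' \<le> card (variety (Suc n) \<beta>'))"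
proof -
  let ?V = "variety n \<beta>" and ?w = "\<lambda>v. measure \<mu> {v}"
  let ?\<beta>' = "atomic_moments ?V ?w"
  have rank: "mm_rank (Suc n) ?\<beta>' \<le> card {v\<in>?V. ?w v \<noteq> 0}" by (rule rank_atomic_le[OF finV])
  have support: "{v\<in>?V. ?w v \<noteq> 0} \<subseteq> variety (Suc n) ?\<beta>'"
    by (rule support_subset_variety_atomic[OF finV]) simp
  have "infinite (variety (Suc n) ?\<beta>') \<or> mm_rank (Suc n) ?\<beta>' \<le> card (variety (Suc n) ?\<beta>')"
  proof (cases "finite (variety (Suc n) ?\<beta>')")
    case True
    then show ?thesis using rank card_mono[OF True support] by simp
  qed simp
  moreover have "psd (moment_matrix (Suc n) ?\<beta>')" by (rule psd_atomic) simp
  ultimately show ?thesis using moments_eq_atomic_variety[OF rep finV] by (intro exI[of _ ?\<beta>']) auto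
qed

theorem corollary3p2:
  fixes n :: nat and \<beta> :: "nat \<Rightarrow> nat \<Rightarrow> real"
  assumes "n \<ge> 1"
    and "finite (variety n \<beta>)"
    and "card (variety n \<beta>) = mm_rank n \<beta>"
  shows "(\<exists>\<mu>. representing_measure n \<beta> \<mu>) \<longleftrightarrow>
         (\<exists>\<beta>'. (\<forall>i j. i + j \<le> 2 * n \<longrightarrow> \<beta>' i j = \<beta> i j) \<and>
               psd (moment_matrix (n + 1) \<beta>') \<and>
               (infinite (variety (n + 1) \<beta>') \<or> mm_rank (n + 1) \<beta>' \<le> card (variety (n + 1) \<beta>')))"
  unfolding Suc_eq_plus1[symmetric]
proof
  assume "\<exists>\<mu>. representing_measure n \<beta> \<mu>"
  then show "\<exists>\<beta>'. (\<forall>i j. i + j \<le> 2 * n \<longrightarrow> \<beta>' i j = \<beta> i j) \<and> psd (moment_matrix (Suc n) \<beta>') \<and>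
      (infinite (variety (Suc n) \<beta>') \<or> mm_rank (Suc n) \<beta>' \<le> card (variety (Suc n) \<beta>'))"
    using psd_extension_if_representing_measure[OF _ assms(2)] by blast
next
  assume "\<exists>\<beta>'. (\<forall>i j. i + j \<le> 2 * n \<longrightarrow> \<beta>' i j = \<beta> i j) \<and> psd (moment_matrix (Suc n) \<beta>') \<and>
      (infinite (variety (Suc n) \<beta>') \<or> mm_rank (Suc n) \<beta>' \<le> card (variety (Suc n) \<beta>'))"
  then show "\<exists>\<mu>. representing_measure n \<beta> \<mu>"
    using representing_measure_if_psd_extension[OF _ _ assms(2,3)] by blast
qed

end
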